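(* Let $n\ge 2$ and let $\mathsf{M}$ be a square submatrix of order $m$ of a matrix in $\mathscr{D}_n$. Then one of the following holds: (i) $|\det\mathsf{M}|\in\{0,1\}$; (ii) there exist an integer $m'\in[m]$ and a matrix $\mathsf{M}'\in\mathscr{D}_{m'}$ such that $|\det\mathsf{M}|=|\det\mathsf{M}'|$.
   Context: Let $e_1,\dots,e_n$ be the standard basis of $\mathbb{R}^n$ and $[\pm n]=\{-n,\dots,-1,1,\dots,n\}$. For $i\in[n-1]$ and $r\in[\pm n]$ with $i<|r|$, set $d(i,r)=e_i+\mathrm{sgn}(r)\,e_{|r|}\in\mathbb{R}^n$. $\mathscr{D}_n$ denotes the set of $n\times n$ real matrices each of whose rows is of the form $d(i,r)$ for some such $i,r$ (rows may repeat). A square submatrix is obtained by deleting some rows and the same number of columns. *)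

theory Defs
  imports "Jordan_Normal_Form.DL_Submatrix" "Jordan_Normal_Form.Determinant"
begin

(* 0-based rendering of d(i,r) = e_i + sgn(r) e_|r| with i < |r| <= n:
   entry 1 at column i, entry s in {1,-1} at column j, where i < j < n. *)
definition d_vec :: "nat \<Rightarrow> nat \<Rightarrow> nat \<Rightarrow> real \<Rightarrow> real vec" where
  "d_vec n i j s = vec n (\<lambda>k. if k = i then 1 else if k = j then s else 0)"

definition is_d_row :: "nat \<Rightarrow> real vec \<Rightarrow> bool" where
  "is_d_row n v \<longleftrightarrow> (\<exists>i j s. i < j \<and> j < n \<and> (s = 1 \<or> s = -1) \<and> v = d_vec n i j s)"

definition in_D :: "nat \<Rightarrow> real mat \<Rightarrow> bool" where
  "in_D n A \<longleftrightarrow> A \<in> carrier_mat n n \<and> (\<forall>k < n. is_d_row n (row A k))"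

end

theory Submission
  imports Defs
begin

text \<open>Every row of a square submatrix of a matrix in \<open>\<D>\<^sub>n\<close> has entries in \<open>{-1,0,1}\<close>, at
  most two of them nonzero. For such an \<open>m \<times> m\<close> matrix, \<open>|det|\<close> is \<open>0\<close> or \<open>2\<^sup>k\<close> with
  \<open>2k \<le> m\<close>, by induction on \<open>m\<close>: a row with at most one nonzero entry is expanded; if two
  rows have the same two-element support, subtracting one from the other leaves a single entry
  \<open>0\<close> or \<open>\<plusminus>2\<close>, and in the resulting minor the other row has a single nonzero entry, so one
  factor \<open>2\<close> costs two orders; if all supports are distinct two-element sets, a column operation
  clears one entry of a row without producing entries \<open>\<plusminus>2\<close>, and expansion lowers the order.
  Conversely \<open>2\<^sup>k\<close> is realised by the block-diagonal matrix with \<open>k\<close> blocks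
  \<open>[[1,1],[1,-1]]\<close>, which lies in \<open>\<D>\<^sub>2\<^sub>k\<close>.\<close>

definition row_support :: "'a :: zero mat \<Rightarrow> nat \<Rightarrow> nat set" where
  "row_support M i = {j. j < dim_col M \<and> M $$ (i,j) \<noteq> 0}"

lemma finite_row_support [simp]: "finite (row_support M i)"
  by (simp add: row_support_def)

lemma row_support_iff:
  "M \<in> carrier_mat n n \<Longrightarrow> j \<in> row_support M i \<longleftrightarrow> j < n \<and> M $$ (i,j) \<noteq> 0"
  by (simp add: row_support_def)

lemma row_support_subset_singleton:
  assumes "card (row_support M i) \<le> 1" and "0 < dim_col M"
  obtains b where "b < dim_col M" and "row_support M i \<subseteq> {b}"
proof (cases "row_support M i = {}")
  case True
  then show ?thesis using that[of 0] assms(2) by blast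
next
  case False
  then obtain b where b: "b \<in> row_support M i" by blast
  then have "row_support M i = {b}"
    using assms(1) card_le_Suc0_iff_eq[OF finite_row_support] by auto
  moreover have "b < dim_col M" using b by (simp add: row_support_def)
  ultimately show ?thesis using that by blast
qed

lemma insert_index_less: "i' < n \<Longrightarrow> insert_index i i' < Suc n"
  unfolding insert_index_def by auto

lemma index_mat_delete:
  assumes "M \<in> carrier_mat (Suc n) (Suc n)" and "i < Suc n" and "j < Suc n"
    and "i' < n" and "j' < n"
  shows "mat_delete M i j $$ (i',j') = M $$ (insert_index i i', insert_index j j')"
  using mat_delete_index[OF assms] by simp

lemma card_row_support_mat_delete:
  assumes M: "M \<in> carrier_mat (Suc n) (Suc n)" and "i < Suc n" and "j < Suc n" and "i' < n"
  shows "card (row_support (mat_delete M i j) i') \<le> card (row_support M (insert_index i i') - {j})"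
proof -
  have "insert_index j ` row_support (mat_delete M i j) i' \<subseteq> row_support M (insert_index i i') - {j}"
    using assms by (auto simp: row_support_def index_mat_delete insert_index_less)
  then have "card (insert_index j ` row_support (mat_delete M i j) i')
      \<le> card (row_support M (insert_index i i') - {j})"
    by (intro card_mono) auto
  then show ?thesis by (simp add: card_image insert_index_inj_on)
qed

lemma abs_det_row_support_subset_singleton:
  fixes M :: "'a :: linordered_idom mat"
  assumes M: "M \<in> carrier_mat (Suc n) (Suc n)" and i: "i < Suc n" and j: "j < Suc n"
    and supp: "row_support M i \<subseteq> {j}"
  shows "\<bar>det M\<bar> = \<bar>M $$ (i,j)\<bar> * \<bar>det (mat_delete M i j)\<bar>"
proof -
  have "det M = (\<Sum>k<Suc n. M $$ (i,k) * cofactor M i k)" by (rule laplace_expansion_row[OF M i])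
  also have "\<dots> = M $$ (i,j) * cofactor M i j"
    by (rule sum.mono_neutral_right[where S="{j}", simplified])
      (use j supp row_support_iff[OF M] in auto)
  finally show ?thesis by (simp add: cofactor_def abs_mult)
qed

lemma mat_delete_addrow:
  assumes "M \<in> carrier_mat n n" and "k < n"
  shows "mat_delete (addrow c k l M) k j = mat_delete M k j"
  by (rule eq_matI) (use assms in \<open>auto simp: mat_delete_def\<close>)

lemma row_support_addrow_subset:
  fixes M :: "'a :: field mat"
  assumes M: "M \<in> carrier_mat n n" and r': "r' < n" and supp_r: "row_support M r \<subseteq> {a,b}"
    and supp_r': "row_support M r' \<subseteq> {a,b}" and pivot: "M $$ (r,a) \<noteq> 0"
  shows "row_support (addrow (- (M $$ (r',a) / M $$ (r,a))) r' r M) r' \<subseteq> {b}"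
proof
  fix j assume "j \<in> row_support (addrow (- (M $$ (r',a) / M $$ (r,a))) r' r M) r'"
  then have j: "j < n" "addrow (- (M $$ (r',a) / M $$ (r,a))) r' r M $$ (r',j) \<noteq> 0"
    using M by (auto simp: row_support_def)
  show "j \<in> {b}"
  proof (rule ccontr)
    assume "j \<notin> {b}"
    then have "j \<noteq> a \<Longrightarrow> M $$ (r,j) = 0 \<and> M $$ (r',j) = 0"
      using j(1) supp_r supp_r' row_support_iff[OF M] by blast
    then show False using j M r' pivot by (cases "j = a") auto
  qed
qed

lemma row_support_addcol_subset:
  fixes M :: "'a :: field mat"
  assumes M: "M \<in> carrier_mat n n" and i: "i < n" and supp: "row_support M i \<subseteq> {a,b}"
    and pivot: "M $$ (i,b) \<noteq> 0"
  shows "row_support (addcol (- (M $$ (i,a) / M $$ (i,b))) a b M) i \<subseteq> {b}"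
proof
  fix j assume "j \<in> row_support (addcol (- (M $$ (i,a) / M $$ (i,b))) a b M) i"
  then have j: "j < n" "addcol (- (M $$ (i,a) / M $$ (i,b))) a b M $$ (i,j) \<noteq> 0"
    using M by (auto simp: row_support_def)
  show "j \<in> {b}"
  proof (rule ccontr)
    assume "j \<notin> {b}"
    then have "j \<noteq> a \<Longrightarrow> M $$ (i,j) = 0"
      using j(1) supp row_support_iff[OF M] by blast
    then show False using j M i pivot by (cases "j = a") auto
  qed
qed

lemma card_row_support_addcol_diff:
  fixes M :: "'a :: comm_ring_1 mat"
  assumes M: "M \<in> carrier_mat n n" and i: "i < n" and b: "b < n"
  shows "card (row_support (addcol c a b M) i - {b}) \<le> card (row_support M i)"
proof (cases "M $$ (i,b) = 0")
  case True
  then have "row_support (addcol c a b M) i - {b} \<subseteq> row_support M i"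
    using assms by (auto simp: row_support_def split: if_split_asm)
  then show ?thesis by (intro card_mono) auto
next
  case False
  then have "b \<in> row_support M i" using M b by (simp add: row_support_def)
  have "row_support (addcol c a b M) i - {b} \<subseteq> insert a (row_support M i - {b})"
    using assms by (auto simp: row_support_def)
  then have "card (row_support (addcol c a b M) i - {b}) \<le> card (insert a (row_support M i - {b}))"
    by (intro card_mono) auto
  also have "\<dots> \<le> Suc (card (row_support M i - {b}))" by (simp add: card_insert_if)
  also have "\<dots> = card (row_support M i)"
    using card_Suc_Diff1[OF finite_row_support \<open>b \<in> row_support M i\<close>] .
  finally show ?thesis .
qed

lemma entry_eq_0_if_distinct_card_2_supports:
  assumes M: "M \<in> carrier_mat n n" and supp_ab: "row_support M k = {a,b}"
    and "card (row_support M k) = 2" and "card (row_support M i) = 2"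
    and "row_support M k \<noteq> row_support M i" and "M $$ (i,b) \<noteq> 0"
  shows "M $$ (i,a) = 0"
proof (rule ccontr)
  assume "M $$ (i,a) \<noteq> 0"
  then have "row_support M k \<subseteq> row_support M i"
    using assms(6) supp_ab row_support_iff[OF M] by auto
  then have "row_support M k = row_support M i"
    by (rule card_subset_eq[OF finite_row_support]) (simp add: assms(3,4))
  then show False using assms(5) by blast
qed

definition sparse_sign_mat :: "nat \<Rightarrow> real mat \<Rightarrow> bool" where
  "sparse_sign_mat m M \<longleftrightarrow> M \<in> carrier_mat m m \<and> (\<forall>i<m. \<forall>j<m. M $$ (i,j) \<in> {-1,0,1})
     \<and> (\<forall>i<m. card (row_support M i) \<le> 2)"

lemma sparse_sign_matD:
  assumes "sparse_sign_mat m M"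
  shows "M \<in> carrier_mat m m" and "\<And>i j. i < m \<Longrightarrow> j < m \<Longrightarrow> M $$ (i,j) \<in> {-1,0,1}"
    and "\<And>i. i < m \<Longrightarrow> card (row_support M i) \<le> 2"
  using assms by (auto simp: sparse_sign_mat_def)

lemma sparse_sign_mat_mat_delete:
  assumes M: "sparse_sign_mat (Suc n) M" and i: "i < Suc n" and j: "j < Suc n"
  shows "sparse_sign_mat n (mat_delete M i j)"
proof -
  note Mc = sparse_sign_matD(1)[OF M]
  show ?thesis unfolding sparse_sign_mat_def
  proof (intro conjI allI impI)
    show "mat_delete M i j \<in> carrier_mat n n" using mat_delete_carrier[OF Mc] by simp
  next
    fix i' j' assume "i' < n" "j' < n"
    then show "mat_delete M i j $$ (i', j') \<in> {- 1, 0, 1}"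
      using sparse_sign_matD(2)[OF M] by (simp add: index_mat_delete[OF Mc i j] insert_index_less)
  next
    fix i' assume "i' < n"
    have "card (row_support M (insert_index i i') - {j}) \<le> card (row_support M (insert_index i i'))"
      by (rule card_mono) auto
    then show "card (row_support (mat_delete M i j) i') \<le> 2"
      using card_row_support_mat_delete[OF Mc i j \<open>i' < n\<close>]
        sparse_sign_matD(3)[OF M insert_index_less[OF \<open>i' < n\<close>, of i]] by linarith
  qed
qed

definition zero_or_pow2 :: "nat \<Rightarrow> real \<Rightarrow> bool" where
  "zero_or_pow2 m x \<longleftrightarrow> x = 0 \<or> (\<exists>k. 2 * k \<le> m \<and> x = 2 ^ k)"

lemma zero_or_pow2_mono: "zero_or_pow2 m x \<Longrightarrow> m \<le> m' \<Longrightarrow> zero_or_pow2 m' x"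
  unfolding zero_or_pow2_def by (elim disjE exE) (auto intro: le_trans)

lemma zero_or_pow2_double:
  "zero_or_pow2 m x \<Longrightarrow> zero_or_pow2 (m + 2) (2 * x)"
  unfolding zero_or_pow2_def by (elim disjE exE) (auto intro!: exI[of _ "Suc _"])

lemma abs_det_sparse_row:
  assumes M: "sparse_sign_mat (Suc q) M" and i: "i < Suc q" and supp: "card (row_support M i) \<le> 1"
    and IH: "\<And>N. sparse_sign_mat q N \<Longrightarrow> zero_or_pow2 q \<bar>det N\<bar>"
  shows "zero_or_pow2 q \<bar>det M\<bar>"
proof -
  note Mc = sparse_sign_matD(1)[OF M]
  obtain j where j: "j < Suc q" and supp_j: "row_support M i \<subseteq> {j}"
    using row_support_subset_singleton[OF supp] Mc by auto
  have "M $$ (i,j) \<in> {-1,0,1}" using sparse_sign_matD(2)[OF M i j] .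
  moreover have "zero_or_pow2 q \<bar>det (mat_delete M i j)\<bar>"
    by (rule IH[OF sparse_sign_mat_mat_delete[OF M i j]])
  ultimately show ?thesis
    using abs_det_row_support_subset_singleton[OF Mc i j supp_j] by (auto simp: zero_or_pow2_def)
qed

lemma sparse_sign_mat_entry_nonzero:
  assumes "sparse_sign_mat m M" and "i < m" and "j \<in> row_support M i"
  shows "M $$ (i,j) = 1 \<or> M $$ (i,j) = -1"
  using assms sparse_sign_matD(2)[OF assms(1)] row_support_iff[OF sparse_sign_matD(1)[OF assms(1)]]
  by fastforce

lemma abs_pm_div_pm_plus_pm:
  "(x::real) \<in> {1,-1} \<Longrightarrow> y \<in> {1,-1} \<Longrightarrow> z \<in> {1,-1} \<Longrightarrow> w \<in> {1,-1}
    \<Longrightarrow> \<bar>- (w / x) * y + z\<bar> \<in> {0,2}"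
  by auto

lemma abs_det_twin_rows:
  assumes M: "sparse_sign_mat (Suc (Suc q)) M" and r: "r < Suc (Suc q)" and r': "r' < Suc (Suc q)"
    and "r \<noteq> r'" and supp_eq: "row_support M r' = row_support M r"
    and two: "card (row_support M r) = 2"
    and IH: "\<And>N. sparse_sign_mat q N \<Longrightarrow> zero_or_pow2 q \<bar>det N\<bar>"
  shows "zero_or_pow2 (Suc (Suc q)) \<bar>det M\<bar>"
proof -
  note Mc = sparse_sign_matD(1)[OF M]
  obtain a b where "a \<noteq> b" and supp_ab: "row_support M r = {a,b}" using two by (meson card_2_iff)
  have b: "b < Suc (Suc q)" using supp_ab row_support_iff[OF Mc] by blast
  have signs: "M $$ (i,j) = 1 \<or> M $$ (i,j) = -1" if "i \<in> {r,r'}" "j \<in> {a,b}" for i j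
    using sparse_sign_mat_entry_nonzero[OF M] that r r' supp_ab supp_eq by auto
  define M' where "M' = addrow (- (M $$ (r',a) / M $$ (r,a))) r' r M"
  have M'c: "M' \<in> carrier_mat (Suc (Suc q)) (Suc (Suc q))" using Mc by (simp add: M'_def)
  have "row_support M' r' \<subseteq> {b}"
    unfolding M'_def
    by (rule row_support_addrow_subset[OF Mc r']) (use supp_ab supp_eq signs[of r a] in auto)
  then have det_M: "\<bar>det M\<bar> = \<bar>M' $$ (r',b)\<bar> * \<bar>det (mat_delete M' r' b)\<bar>"
    using abs_det_row_support_subset_singleton[OF M'c r' b]
      det_addrow[OF r \<open>r \<noteq> r'\<close>[symmetric] Mc] by (simp add: M'_def)
  have M'_b: "M' $$ (r',b) = - (M $$ (r',a) / M $$ (r,a)) * M $$ (r,b) + M $$ (r',b)"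
    using Mc r' b by (simp add: M'_def)
  have pivot: "\<bar>M' $$ (r',b)\<bar> \<in> {0,2}"
    unfolding M'_b by (rule abs_pm_div_pm_plus_pm)
      (use signs[of r a] signs[of r b] signs[of r' a] signs[of r' b] in auto)
  define D where "D = mat_delete M r' b"
  have D_eq: "mat_delete M' r' b = D"
    unfolding M'_def D_def by (rule mat_delete_addrow[OF Mc r'])
  define i where "i = delete_index r' r"
  have i: "i < Suc q" using r r' \<open>r \<noteq> r'\<close> unfolding i_def delete_index_def by auto
  have "card (row_support D i) \<le> card (row_support M r - {b})"
    using card_row_support_mat_delete[OF Mc r' b i]
    by (simp add: D_def i_def insert_delete_index[OF \<open>r \<noteq> r'\<close>])
  also have "row_support M r - {b} = {a}" using supp_ab \<open>a \<noteq> b\<close> by auto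
  finally have "zero_or_pow2 q \<bar>det D\<bar>"
    using abs_det_sparse_row[OF sparse_sign_mat_mat_delete[OF M r' b] i]
      IH unfolding D_def by simp
  then have "zero_or_pow2 (Suc (Suc q)) (2 * \<bar>det D\<bar>)"
    using zero_or_pow2_double by simp
  with pivot show ?thesis
    unfolding det_M D_eq by (auto simp: zero_or_pow2_def)
qed

lemma sparse_sign_mat_addcol_mat_delete:
  assumes M: "sparse_sign_mat (Suc p) M" and two: "\<forall>i<Suc p. card (row_support M i) = 2"
    and distinct: "\<forall>i<Suc p. \<forall>i'<Suc p. i \<noteq> i' \<longrightarrow> row_support M i \<noteq> row_support M i'"
    and "a \<noteq> b" and supp_ab: "row_support M 0 = {a,b}" and c: "c = 1 \<or> c = -1"
  shows "sparse_sign_mat p (mat_delete (addcol c a b M) 0 b)"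
proof -
  note Mc = sparse_sign_matD(1)[OF M]
  define M' where "M' = addcol c a b M"
  have M'c: "M' \<in> carrier_mat (Suc p) (Suc p)" using Mc unfolding M'_def by (intro carrier_matI) auto
  have b: "b < Suc p" using supp_ab row_support_iff[OF Mc] by blast
  have M'_entry: "M' $$ (i,j) = (if j = a then c * M $$ (i,b) + M $$ (i,j) else M $$ (i,j))"
    if "i < Suc p" "j < Suc p" for i j
    using Mc that by (auto simp: M'_def)
  have no_ab: "M $$ (i,a) = 0" if "i < Suc p" "i \<noteq> 0" and "M $$ (i,b) \<noteq> 0" for i
    using entry_eq_0_if_distinct_card_2_supports[OF Mc supp_ab] two distinct that by blast
  show ?thesis unfolding sparse_sign_mat_def M'_def[symmetric]
  proof (intro conjI allI impI)
    show "mat_delete M' 0 b \<in> carrier_mat p p" using mat_delete_carrier[OF M'c] by simp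
  next
    fix i' j' assume ij: "i' < p" "j' < p"
    define i where "i = insert_index 0 i'"
    define j where "j = insert_index b j'"
    have i: "i < Suc p" "i \<noteq> 0" using ij unfolding i_def by auto
    have j: "j < Suc p" using ij insert_index_less unfolding j_def by auto
    have "mat_delete M' 0 b $$ (i',j') = M' $$ (i,j)"
      unfolding i_def j_def by (rule index_mat_delete[OF M'c _ b ij]) simp
    then show "mat_delete M' 0 b $$ (i', j') \<in> {- 1, 0, 1}"
      using M'_entry[OF i(1) j] no_ab[OF i] c
        sparse_sign_matD(2)[OF M i(1) b] sparse_sign_matD(2)[OF M i(1) j]
      by (cases "M $$ (i,b) = 0") auto
  next
    fix i' assume i': "i' < p"
    define i where "i = insert_index 0 i'"
    have i: "i < Suc p" "i \<noteq> 0" using i' unfolding i_def by auto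
    have "card (row_support M' i - {b}) \<le> 2"
      using card_row_support_addcol_diff[OF Mc i(1) b] two i(1) by (simp add: M'_def)
    then show "card (row_support (mat_delete M' 0 b) i') \<le> 2"
      using card_row_support_mat_delete[OF M'c _ b i'] unfolding i_def by fastforce
  qed
qed

lemma abs_det_distinct_supports:
  assumes M: "sparse_sign_mat (Suc p) M" and two: "\<forall>i<Suc p. card (row_support M i) = 2"
    and distinct: "\<forall>i<Suc p. \<forall>i'<Suc p. i \<noteq> i' \<longrightarrow> row_support M i \<noteq> row_support M i'"
    and IH: "\<And>N. sparse_sign_mat p N \<Longrightarrow> zero_or_pow2 p \<bar>det N\<bar>"
  shows "zero_or_pow2 (Suc p) \<bar>det M\<bar>"
proof -
  note Mc = sparse_sign_matD(1)[OF M]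
  obtain a b where "a \<noteq> b" and supp_ab: "row_support M 0 = {a,b}"
    using two by (meson card_2_iff zero_less_Suc)
  have b: "b < Suc p" using supp_ab row_support_iff[OF Mc] by blast
  have signs: "M $$ (0,j) = 1 \<or> M $$ (0,j) = -1" if "j \<in> {a,b}" for j
    using sparse_sign_mat_entry_nonzero[OF M] that supp_ab by auto
  define c where "c = - (M $$ (0,a) / M $$ (0,b))"
  have c: "c = 1 \<or> c = -1" using signs[of a] signs[of b] unfolding c_def by auto
  define M' where "M' = addcol c a b M"
  have M'c: "M' \<in> carrier_mat (Suc p) (Suc p)" using Mc unfolding M'_def by (intro carrier_matI) auto
  have "row_support M' 0 \<subseteq> {b}"
    unfolding M'_def c_def
    by (rule row_support_addcol_subset[OF Mc zero_less_Suc]) (use supp_ab signs[of b] in auto)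
  moreover have "\<bar>M' $$ (0,b)\<bar> = 1" using Mc b \<open>a \<noteq> b\<close> signs[of b] by (auto simp: M'_def)
  ultimately have "\<bar>det M\<bar> = \<bar>det (mat_delete M' 0 b)\<bar>"
    using abs_det_row_support_subset_singleton[OF M'c zero_less_Suc b] det_addcol[OF b \<open>a \<noteq> b\<close> Mc]
    by (simp add: M'_def)
  then show ?thesis
    using IH[OF sparse_sign_mat_addcol_mat_delete[OF M two distinct \<open>a \<noteq> b\<close> supp_ab c]]
      zero_or_pow2_mono[of p _ "Suc p"] by (simp add: M'_def)
qed

theorem abs_det_sparse_sign_mat: "sparse_sign_mat m M \<Longrightarrow> zero_or_pow2 m \<bar>det M\<bar>"
proof (induction m arbitrary: M rule: less_induct)
  case (less m)
  note M = less.prems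
  show ?case
  proof (cases m)
    case 0
    then have "det M = 1" using sparse_sign_matD(1)[OF M] by simp
    then show ?thesis unfolding zero_or_pow2_def by (intro disjI2 exI[of _ 0]) simp
  next
    case (Suc p)
    note M = M[unfolded Suc]
    consider (sparse_row) i where "i < Suc p" "card (row_support M i) \<le> 1"
      | (twins) r r' where "r < Suc p" "r' < Suc p" "r \<noteq> r'"
          "row_support M r' = row_support M r" "card (row_support M r) = 2"
      | (distinct) "\<forall>i<Suc p. card (row_support M i) = 2"
          "\<forall>i<Suc p. \<forall>i'<Suc p. i \<noteq> i' \<longrightarrow> row_support M i \<noteq> row_support M i'"
      using sparse_sign_matD(3)[OF M] by (metis le_SucE numeral_2_eq_2 One_nat_def)
    then show ?thesis
    proof cases
      case sparse_row
      then show ?thesis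
        using abs_det_sparse_row[OF M] less.IH Suc zero_or_pow2_mono[of p _ m] by auto
    next
      case twins
      then obtain q where "p = Suc q" by (cases p) auto
      then show ?thesis
        using abs_det_twin_rows[OF M[unfolded \<open>p = Suc q\<close>]] twins less.IH Suc by auto
    next
      case distinct
      then show ?thesis using abs_det_distinct_supports[OF M] less.IH Suc by auto
    qed
  qed
qed

definition pair_block_mat :: "nat \<Rightarrow> real mat" where
  "pair_block_mat k = mat (2*k) (2*k)
     (\<lambda>(i,j). if i div 2 = j div 2 then (if odd i \<and> odd j then -1 else 1) else 0)"

lemma pair_block_mat_carrier: "pair_block_mat k \<in> carrier_mat (2*k) (2*k)"
  by (simp add: pair_block_mat_def)

lemma pair_block_mat_Suc:
  "pair_block_mat (Suc k) =
     four_block_mat (pair_block_mat 1) (0\<^sub>m 2 (2*k)) (0\<^sub>m (2*k) 2) (pair_block_mat k)"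
  (is "_ = ?B")
proof (rule eq_matI)
  fix i j assume "i < dim_row ?B" "j < dim_col ?B"
  then have ij: "i < 2 + 2*k" "j < 2 + 2*k" by (simp_all add: pair_block_mat_def)
  consider "i < 2" "j < 2" | "i < 2" "j \<ge> 2" | "i \<ge> 2" "j < 2" | "i \<ge> 2" "j \<ge> 2" by linarith
  then show "pair_block_mat (Suc k) $$ (i, j) = ?B $$ (i, j)"
  proof cases
    case 4
    then obtain i' j' where "i = i' + 2" "j = j' + 2" by (metis add.commute le_Suc_ex)
    then show ?thesis using ij by (auto simp: pair_block_mat_def)
  qed (use ij in \<open>auto simp: pair_block_mat_def\<close>)
qed (auto simp: pair_block_mat_def)

lemma det_pair_block_mat_1: "det (pair_block_mat 1) = -2"
proof -
  let ?B = "pair_block_mat 1"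
  have B: "?B \<in> carrier_mat 2 2" using pair_block_mat_carrier[of 1] by simp
  have "det ?B = (\<Sum>j<2. ?B $$ (0,j) * cofactor ?B 0 j)"
    by (rule laplace_expansion_row[OF B]) simp
  also have "\<dots> = (\<Sum>j<2::nat. -1)"
  proof (rule sum.cong)
    fix j :: nat assume "j \<in> {..<2}"
    then show "?B $$ (0,j) * cofactor ?B 0 j = -1" unfolding cofactor_def
      by (subst det_single) (auto simp: mat_delete_def pair_block_mat_def less_2_cases_iff)
  qed simp
  finally show ?thesis by simp
qed

lemma abs_det_pair_block_mat: "\<bar>det (pair_block_mat k)\<bar> = 2 ^ k"
proof (induction k)
  case 0
  then show ?case using pair_block_mat_carrier[of 0] by simp
next
  case (Suc k)
  have "det (pair_block_mat (Suc k)) = det (pair_block_mat 1) * det (pair_block_mat k)"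
    unfolding pair_block_mat_Suc
    by (rule det_four_block_mat_lower_left_zero[of _ 2 _ "2*k"])
      (use pair_block_mat_carrier[of 1] pair_block_mat_carrier[of k] in auto)
  then show ?case using Suc det_pair_block_mat_1 by (simp add: abs_mult)
qed

lemma div2_eq_iff_even: "even (x::nat) \<Longrightarrow> y div 2 = x div 2 \<longleftrightarrow> y = x \<or> y = Suc x"
  by presburger

lemma div2_eq_iff_odd: "odd (x::nat) \<Longrightarrow> y div 2 = x div 2 \<longleftrightarrow> y = x \<or> Suc y = x"
  by presburger

lemma in_D_pair_block_mat: "in_D (2*k) (pair_block_mat k)"
  unfolding in_D_def
proof (intro conjI allI impI pair_block_mat_carrier)
  fix x assume x: "x < 2*k"
  show "is_d_row (2*k) (row (pair_block_mat k) x)"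
  proof (cases "even x")
    case True
    have "Suc x < 2*k" using x True by presburger
    moreover have "row (pair_block_mat k) x = d_vec (2*k) x (Suc x) 1"
      by (rule eq_vecI) (use x True in \<open>auto simp: pair_block_mat_def d_vec_def div2_eq_iff_even\<close>)
    ultimately show ?thesis unfolding is_d_row_def by blast
  next
    case False
    have "0 < x" "x - 1 < x" using False by presburger+
    moreover have "row (pair_block_mat k) x = d_vec (2*k) (x - 1) x (-1)"
      by (rule eq_vecI) (use x False \<open>0 < x\<close> in \<open>auto simp: pair_block_mat_def d_vec_def div2_eq_iff_odd\<close>)
    ultimately show ?thesis unfolding is_d_row_def using x by blast
  qed
qed

lemma in_D_row_entries:
  assumes "in_D n A" and "x < n"
  shows "\<exists>s i j. (s = 1 \<or> s = -1) \<and>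
           (\<forall>y<n. A $$ (x,y) = (if y = i then 1 else if y = j then s else 0))"
proof -
  have A: "A \<in> carrier_mat n n" and "is_d_row n (row A x)" using assms by (auto simp: in_D_def)
  then obtain i j s where "s = 1 \<or> s = -1" and row: "row A x = d_vec n i j s"
    unfolding is_d_row_def by blast
  moreover have "A $$ (x,y) = (if y = i then 1 else if y = j then s else 0)" if "y < n" for y
  proof -
    have "A $$ (x,y) = row A x $ y" using A assms(2) that by simp
    then show ?thesis using that by (simp add: row d_vec_def)
  qed
  ultimately show ?thesis by blast
qed

lemma inj_on_pick: "inj_on (pick J) {..<card J}"
proof (rule linorder_inj_onI')
  fix i j assume "j \<in> {..<card J}" and "i < j"
  then show "pick J i \<noteq> pick J j" using pick_mono[of j J i] by auto
qed

lemma sparse_sign_mat_submatrix: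
  assumes A: "in_D n A" and I: "I \<subseteq> {..<n}" and J: "J \<subseteq> {..<n}" and IJ: "card I = card J"
  shows "sparse_sign_mat (card I) (submatrix A I J)"
proof -
  let ?M = "submatrix A I J"
  have Ac: "A \<in> carrier_mat n n" using A by (simp add: in_D_def)
  have rows: "{i. i < dim_row A \<and> i \<in> I} = I" and cols: "{j. j < dim_col A \<and> j \<in> J} = J"
    using I J Ac by auto
  have Mc: "?M \<in> carrier_mat (card I) (card I)"
    by (rule carrier_matI) (simp_all only: dim_submatrix rows cols IJ)
  have entry: "?M $$ (i,j) = A $$ (pick I i, pick J j)" if "i < card I" "j < card I" for i j
    using that by (intro submatrix_index) (simp_all only: rows cols IJ)
  have pick_I: "pick I i < n" if "i < card I" for i
    using pick_in_set[of i I] that I by auto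
  have pick_J: "pick J j < n" if "j < card I" for j
    using pick_in_set[of j J] that J IJ by auto
  show ?thesis unfolding sparse_sign_mat_def
  proof (intro conjI allI impI Mc)
    fix i j assume ij: "i < card I" "j < card I"
    obtain s i0 j0 where "s = 1 \<or> s = -1"
      and "\<forall>y<n. A $$ (pick I i, y) = (if y = i0 then 1 else if y = j0 then s else 0)"
      using in_D_row_entries[OF A pick_I[OF ij(1)]] by blast
    then show "?M $$ (i,j) \<in> {-1,0,1}" using entry[OF ij] pick_J[OF ij(2)] by auto
  next
    fix i assume i: "i < card I"
    obtain s i0 j0
      where row: "\<forall>y<n. A $$ (pick I i, y) = (if y = i0 then 1 else if y = j0 then s else 0)"
      using in_D_row_entries[OF A pick_I[OF i]] by blast
    have "pick J ` row_support ?M i \<subseteq> {i0, j0}"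
    proof
      fix y assume "y \<in> pick J ` row_support ?M i"
      then obtain j where j: "j < card I" "?M $$ (i,j) \<noteq> 0" "y = pick J j"
        using row_support_iff[OF Mc] by blast
      then show "y \<in> {i0, j0}" using entry[OF i j(1)] row pick_J[OF j(1)] by (auto split: if_splits)
    qed
    moreover have "inj_on (pick J) (row_support ?M i)"
      by (rule inj_on_subset[OF inj_on_pick]) (use row_support_iff[OF Mc] IJ in auto)
    ultimately have "card (row_support ?M i) \<le> card {i0, j0}" by (intro card_inj_on_le) auto
    also have "\<dots> \<le> 2" by (simp add: card_insert_if)
    finally show "card (row_support ?M i) \<le> 2" .
  qed
qed

theorem mainTheorem3:
  fixes n :: nat and A :: "real mat" and I J :: "nat set"
  assumes "n \<ge> 2" and "in_D n A"
    and "I \<subseteq> {..<n}" and "J \<subseteq> {..<n}" and "card I = card J"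
  shows "\<bar>det (submatrix A I J)\<bar> \<in> {0, 1} \<or>
         (\<exists>m' M'. 1 \<le> m' \<and> m' \<le> card I \<and> in_D m' M' \<and>
                   \<bar>det (submatrix A I J)\<bar> = \<bar>det M'\<bar>)"
proof -
  have "zero_or_pow2 (card I) \<bar>det (submatrix A I J)\<bar>"
    using abs_det_sparse_sign_mat[OF sparse_sign_mat_submatrix[OF assms(2-5)]] .
  then consider "\<bar>det (submatrix A I J)\<bar> = 0"
    | k where "2 * k \<le> card I" "\<bar>det (submatrix A I J)\<bar> = 2 ^ k"
    unfolding zero_or_pow2_def by blast
  then show ?thesis
  proof cases
    case (2 k)
    show ?thesis
    proof (cases "k = 0")
      case False
      then show ?thesis
        using 2 in_D_pair_block_mat[of k] abs_det_pair_block_mat[of k]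
        by (intro disjI2 exI[of _ "2 * k"] exI[of _ "pair_block_mat k"]) simp
    qed (use 2 in simp)
  qed simp
qed

end
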